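(* Let $\mathcal S$ and $\mathcal T$ be additive categories and let $T:\mathcal S\to\mathcal T$ be an additive functor. (a) If $T$ has a left adjoint $S_\ell$, then an object $Q$ of $\mathcal S$ is $T$-relative projective if and only if the counit $\eta_Q:S_\ell TQ\to Q$ of the adjunction is an epimorphism. Any object of $\mathrm{add}(\mathrm{im}(S_\ell))$ is $T$-relative projective. (b) If $T$ has a right adjoint $S_r$, then an object $Q$ of $\mathcal S$ is $T$-relative injective if and only if the unit $\epsilon_Q:Q\to S_rTQ$ of the adjunction is a monomorphism. Any object of $\mathrm{add}(\mathrm{im}(S_r))$ is $T$-relative injective.
   Context: An object $Q$ of $\mathcal S$ is $T$-relative projective if the natural transformation $\mathcal S(Q,-)\to\mathcal T(TQ,T-)$ induced by $T$ is injective (componentwise), and $T$-relative injective if the natural transformation $\mathcal S(-,Q)\to\mathcal T(T-,TQ)$ induced by $T$ is injective. $\mathrm{add}(\mathrm{im}(F))$ denotes the full subcategory of direct summands of finite direct sums of objects in the image of $F$. *)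

theory Defs
  imports Main
begin

text \<open>Categories with explicit object set, hom-sets (pairwise disjoint),
 composition (Comp g f = g after f) and identities, together with the
 preadditive structure (abelian group on each hom-set, bilinear composition).\<close>

record ('o, 'm) cat =
  Obj  :: "'o set"
  Hom  :: "'o \<Rightarrow> 'o \<Rightarrow> 'm set"
  Comp :: "'m \<Rightarrow> 'm \<Rightarrow> 'm"
  Id   :: "'o \<Rightarrow> 'm"
  Add  :: "'m \<Rightarrow> 'm \<Rightarrow> 'm"
  Neg  :: "'m \<Rightarrow> 'm"
  Zero :: "'o \<Rightarrow> 'o \<Rightarrow> 'm"

definition category :: "('o, 'm, 'x) cat_scheme \<Rightarrow> bool" where
  "category C \<longleftrightarrow>
     (\<forall>A B. (A \<notin> Obj C \<or> B \<notin> Obj C) \<longrightarrow> Hom C A B = {}) \<and>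
     (\<forall>A B A' B' f. f \<in> Hom C A B \<longrightarrow> f \<in> Hom C A' B' \<longrightarrow> A = A' \<and> B = B') \<and>
     (\<forall>A\<in>Obj C. Id C A \<in> Hom C A A) \<and>
     (\<forall>A B D f g. f \<in> Hom C A B \<longrightarrow> g \<in> Hom C B D \<longrightarrow> Comp C g f \<in> Hom C A D) \<and>
     (\<forall>A B D E f g h. f \<in> Hom C A B \<longrightarrow> g \<in> Hom C B D \<longrightarrow> h \<in> Hom C D E \<longrightarrow>
        Comp C h (Comp C g f) = Comp C (Comp C h g) f) \<and>
     (\<forall>A B f. f \<in> Hom C A B \<longrightarrow> Comp C (Id C B) f = f \<and> Comp C f (Id C A) = f)"

definition preadditive :: "('o, 'm, 'x) cat_scheme \<Rightarrow> bool" where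
  "preadditive C \<longleftrightarrow> category C \<and>
     (\<forall>A\<in>Obj C. \<forall>B\<in>Obj C.
        Zero C A B \<in> Hom C A B \<and>
        (\<forall>f\<in>Hom C A B. \<forall>g\<in>Hom C A B. Add C f g \<in> Hom C A B) \<and>
        (\<forall>f\<in>Hom C A B. Neg C f \<in> Hom C A B) \<and>
        (\<forall>f\<in>Hom C A B. \<forall>g\<in>Hom C A B. \<forall>h\<in>Hom C A B.
            Add C (Add C f g) h = Add C f (Add C g h)) \<and>
        (\<forall>f\<in>Hom C A B. \<forall>g\<in>Hom C A B. Add C f g = Add C g f) \<and>
        (\<forall>f\<in>Hom C A B. Add C f (Zero C A B) = f) \<and>
        (\<forall>f\<in>Hom C A B. Add C f (Neg C f) = Zero C A B)) \<and>
     (\<forall>A B D f g h. f \<in> Hom C A B \<longrightarrow> g \<in> Hom C A B \<longrightarrow> h \<in> Hom C B D \<longrightarrow>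
        Comp C h (Add C f g) = Add C (Comp C h f) (Comp C h g)) \<and>
     (\<forall>A B D f g h. f \<in> Hom C B D \<longrightarrow> g \<in> Hom C B D \<longrightarrow> h \<in> Hom C A B \<longrightarrow>
        Comp C (Add C f g) h = Add C (Comp C f h) (Comp C g h))"

definition zero_object :: "('o, 'm, 'x) cat_scheme \<Rightarrow> 'o \<Rightarrow> bool" where
  "zero_object C Z \<longleftrightarrow> Z \<in> Obj C \<and> Id C Z = Zero C Z Z"

definition biproduct :: "('o, 'm, 'x) cat_scheme \<Rightarrow> 'o \<Rightarrow> 'o \<Rightarrow> 'o \<Rightarrow> bool" where
  "biproduct C P A B \<longleftrightarrow> P \<in> Obj C \<and> A \<in> Obj C \<and> B \<in> Obj C \<and>
     (\<exists>i1 i2 p1 p2. i1 \<in> Hom C A P \<and> i2 \<in> Hom C B P \<and> p1 \<in> Hom C P A \<and> p2 \<in> Hom C P B \<and>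
        Comp C p1 i1 = Id C A \<and> Comp C p2 i2 = Id C B \<and>
        Comp C p2 i1 = Zero C A B \<and> Comp C p1 i2 = Zero C B A \<and>
        Add C (Comp C i1 p1) (Comp C i2 p2) = Id C P)"

definition additive :: "('o, 'm, 'x) cat_scheme \<Rightarrow> bool" where
  "additive C \<longleftrightarrow> preadditive C \<and> (\<exists>Z. zero_object C Z) \<and>
     (\<forall>A\<in>Obj C. \<forall>B\<in>Obj C. \<exists>P. biproduct C P A B)"

definition is_functor ::
  "('o, 'm, 'x) cat_scheme \<Rightarrow> ('p, 'n, 'y) cat_scheme \<Rightarrow> ('o \<Rightarrow> 'p) \<Rightarrow> ('m \<Rightarrow> 'n) \<Rightarrow> bool" where
  "is_functor C D Fo Fm \<longleftrightarrow>
     (\<forall>A\<in>Obj C. Fo A \<in> Obj D) \<and>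
     (\<forall>A B f. f \<in> Hom C A B \<longrightarrow> Fm f \<in> Hom D (Fo A) (Fo B)) \<and>
     (\<forall>A\<in>Obj C. Fm (Id C A) = Id D (Fo A)) \<and>
     (\<forall>A B E f g. f \<in> Hom C A B \<longrightarrow> g \<in> Hom C B E \<longrightarrow> Fm (Comp C g f) = Comp D (Fm g) (Fm f))"

definition additive_functor ::
  "('o, 'm, 'x) cat_scheme \<Rightarrow> ('p, 'n, 'y) cat_scheme \<Rightarrow> ('o \<Rightarrow> 'p) \<Rightarrow> ('m \<Rightarrow> 'n) \<Rightarrow> bool" where
  "additive_functor C D Fo Fm \<longleftrightarrow> is_functor C D Fo Fm \<and>
     (\<forall>A B f g. f \<in> Hom C A B \<longrightarrow> g \<in> Hom C A B \<longrightarrow> Fm (Add C f g) = Add D (Fm f) (Fm g))"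

definition adjunction ::
  "('o, 'm, 'x) cat_scheme \<Rightarrow> ('p, 'n, 'y) cat_scheme \<Rightarrow>
   ('p \<Rightarrow> 'o) \<Rightarrow> ('n \<Rightarrow> 'm) \<Rightarrow> ('o \<Rightarrow> 'p) \<Rightarrow> ('m \<Rightarrow> 'n) \<Rightarrow>
   ('p \<Rightarrow> 'n) \<Rightarrow> ('o \<Rightarrow> 'm) \<Rightarrow> bool" where
  "adjunction C D Lo Lm Ro Rm u c \<longleftrightarrow>
     is_functor D C Lo Lm \<and> is_functor C D Ro Rm \<and>
     (\<forall>X\<in>Obj D. u X \<in> Hom D X (Ro (Lo X))) \<and>
     (\<forall>X Y f. f \<in> Hom D X Y \<longrightarrow> Comp D (Rm (Lm f)) (u X) = Comp D (u Y) f) \<and>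
     (\<forall>Y\<in>Obj C. c Y \<in> Hom C (Lo (Ro Y)) Y) \<and>
     (\<forall>X Y f. f \<in> Hom C X Y \<longrightarrow> Comp C f (c X) = Comp C (c Y) (Lm (Rm f))) \<and>
     (\<forall>X\<in>Obj D. Comp C (c (Lo X)) (Lm (u X)) = Id C (Lo X)) \<and>
     (\<forall>Y\<in>Obj C. Comp D (Rm (c Y)) (u (Ro Y)) = Id D (Ro Y))"

definition cat_epi :: "('o, 'm, 'x) cat_scheme \<Rightarrow> 'm \<Rightarrow> bool" where
  "cat_epi C f \<longleftrightarrow> (\<exists>A B. f \<in> Hom C A B \<and>
     (\<forall>Y g h. g \<in> Hom C B Y \<longrightarrow> h \<in> Hom C B Y \<longrightarrow> Comp C g f = Comp C h f \<longrightarrow> g = h))"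

definition cat_mono :: "('o, 'm, 'x) cat_scheme \<Rightarrow> 'm \<Rightarrow> bool" where
  "cat_mono C f \<longleftrightarrow> (\<exists>A B. f \<in> Hom C A B \<and>
     (\<forall>Y g h. g \<in> Hom C Y A \<longrightarrow> h \<in> Hom C Y A \<longrightarrow> Comp C f g = Comp C f h \<longrightarrow> g = h))"

definition rel_projective ::
  "('o, 'm, 'x) cat_scheme \<Rightarrow> ('m \<Rightarrow> 'n) \<Rightarrow> 'o \<Rightarrow> bool" where
  "rel_projective S Tm Q \<longleftrightarrow> Q \<in> Obj S \<and> (\<forall>X\<in>Obj S. inj_on Tm (Hom S Q X))"

definition rel_injective ::
  "('o, 'm, 'x) cat_scheme \<Rightarrow> ('m \<Rightarrow> 'n) \<Rightarrow> 'o \<Rightarrow> bool" where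
  "rel_injective S Tm Q \<longleftrightarrow> Q \<in> Obj S \<and> (\<forall>X\<in>Obj S. inj_on Tm (Hom S X Q))"

inductive_set fin_sums_im ::
  "('o, 'm, 'x) cat_scheme \<Rightarrow> 'p set \<Rightarrow> ('p \<Rightarrow> 'o) \<Rightarrow> 'o set"
  for C :: "('o, 'm, 'x) cat_scheme" and ObjD :: "'p set" and Fo :: "'p \<Rightarrow> 'o" where
  zero: "zero_object C Z \<Longrightarrow> Z \<in> fin_sums_im C ObjD Fo"
| sum: "P \<in> fin_sums_im C ObjD Fo \<Longrightarrow> X \<in> ObjD \<Longrightarrow> biproduct C B P (Fo X)
        \<Longrightarrow> B \<in> fin_sums_im C ObjD Fo"

definition add_im :: "('o, 'm, 'x) cat_scheme \<Rightarrow> 'p set \<Rightarrow> ('p \<Rightarrow> 'o) \<Rightarrow> 'o set" where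
  "add_im C ObjD Fo = {Q. \<exists>P\<in>fin_sums_im C ObjD Fo. \<exists>Q'. biproduct C P Q Q'}"

end

theory Submission
  imports Defs
begin

(* If T has a left adjoint L with unit u and counit c, the triangle identity makes T(c Q) a split
   epimorphism, so faithfulness of T on maps out of Q forces c Q to be epi; conversely, naturality
   gives f o c Q = c X o L(T f), so T f = T g implies f = g once c Q is epi. For Q = L X the counit
   is split by L(u X). Relative projectives are closed under zero objects, binary biproducts
   (f = f i1 p1 + f i2 p2) and retracts, which covers add(im L). Part (b) is part (a) for the
   opposite categories, where a right adjoint of T becomes a left adjoint of the opposite of T. *)

lemma cat_hom_objs: "category C \<Longrightarrow> f \<in> Hom C A B \<Longrightarrow> A \<in> Obj C \<and> B \<in> Obj C"
  unfolding category_def by (metis empty_iff)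

lemma cat_hom_unique: "category C \<Longrightarrow> f \<in> Hom C A B \<Longrightarrow> f \<in> Hom C A' B' \<Longrightarrow> A = A' \<and> B = B'"
  unfolding category_def by (elim conjE) metis

lemma cat_comp_hom: "category C \<Longrightarrow> f \<in> Hom C A B \<Longrightarrow> g \<in> Hom C B D \<Longrightarrow> Comp C g f \<in> Hom C A D"
  unfolding category_def by (elim conjE) metis

lemma cat_comp_assoc:
  "category C \<Longrightarrow> f \<in> Hom C A B \<Longrightarrow> g \<in> Hom C B D \<Longrightarrow> h \<in> Hom C D E \<Longrightarrow>
   Comp C (Comp C h g) f = Comp C h (Comp C g f)"
  unfolding category_def by (elim conjE) metis

lemma cat_id_right: "category C \<Longrightarrow> f \<in> Hom C A B \<Longrightarrow> Comp C f (Id C A) = f"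
  unfolding category_def by (elim conjE) metis

lemma functor_obj: "is_functor C D Fo Fm \<Longrightarrow> A \<in> Obj C \<Longrightarrow> Fo A \<in> Obj D"
  unfolding is_functor_def by blast

lemma functor_hom: "is_functor C D Fo Fm \<Longrightarrow> f \<in> Hom C A B \<Longrightarrow> Fm f \<in> Hom D (Fo A) (Fo B)"
  unfolding is_functor_def by blast

lemma functor_comp:
  "is_functor C D Fo Fm \<Longrightarrow> f \<in> Hom C A B \<Longrightarrow> g \<in> Hom C B E \<Longrightarrow>
   Fm (Comp C g f) = Comp D (Fm g) (Fm f)"
  unfolding is_functor_def by blast

lemma adjunction_left_functor: "adjunction C D Lo Lm Ro Rm u c \<Longrightarrow> is_functor D C Lo Lm"
  unfolding adjunction_def by blast

lemma adjunction_right_functor: "adjunction C D Lo Lm Ro Rm u c \<Longrightarrow> is_functor C D Ro Rm"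
  unfolding adjunction_def by blast

lemma adjunction_unit_hom: "adjunction C D Lo Lm Ro Rm u c \<Longrightarrow> X \<in> Obj D \<Longrightarrow> u X \<in> Hom D X (Ro (Lo X))"
  unfolding adjunction_def by blast

lemma adjunction_counit_hom: "adjunction C D Lo Lm Ro Rm u c \<Longrightarrow> Y \<in> Obj C \<Longrightarrow> c Y \<in> Hom C (Lo (Ro Y)) Y"
  unfolding adjunction_def by blast

lemma adjunction_counit_natural:
  "adjunction C D Lo Lm Ro Rm u c \<Longrightarrow> f \<in> Hom C X Y \<Longrightarrow> Comp C f (c X) = Comp C (c Y) (Lm (Rm f))"
  unfolding adjunction_def by blast

lemma adjunction_triangle_left:
  "adjunction C D Lo Lm Ro Rm u c \<Longrightarrow> X \<in> Obj D \<Longrightarrow> Comp C (c (Lo X)) (Lm (u X)) = Id C (Lo X)"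
  unfolding adjunction_def by blast

lemma adjunction_triangle_right:
  "adjunction C D Lo Lm Ro Rm u c \<Longrightarrow> Y \<in> Obj C \<Longrightarrow> Comp D (Rm (c Y)) (u (Ro Y)) = Id D (Ro Y)"
  unfolding adjunction_def by blast

lemma preadditive_category: "preadditive C \<Longrightarrow> category C"
  by (simp add: preadditive_def)

lemmas preadditive_hom_groups = preadditive_def[THEN iffD1, THEN conjunct2, THEN conjunct1]

lemma preadditive_comp_add_left:
  "preadditive C \<Longrightarrow> f \<in> Hom C A B \<Longrightarrow> g \<in> Hom C A B \<Longrightarrow> h \<in> Hom C B D \<Longrightarrow>
   Comp C h (Add C f g) = Add C (Comp C h f) (Comp C h g)"
  unfolding preadditive_def by blast

lemma preadditive_idem_eq_zero:
  assumes "preadditive C" and a: "a \<in> Hom C A B" and idem: "Add C a a = a"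
  shows "a = Zero C A B"
proof -
  have "A \<in> Obj C" "B \<in> Obj C"
    using cat_hom_objs[OF preadditive_category[OF assms(1)] a] by auto
  with preadditive_hom_groups[OF assms(1)]
  have assoc: "Add C (Add C a a) (Neg C a) = Add C a (Add C a (Neg C a))"
    and add_neg: "Add C a (Neg C a) = Zero C A B" and add_zero: "Add C a (Zero C A B) = a"
    using a by blast+
  have "Zero C A B = Add C (Add C a a) (Neg C a)"
    using idem add_neg by simp
  also have "\<dots> = Add C a (Zero C A B)"
    using assoc add_neg by simp
  also have "\<dots> = a"
    using add_zero .
  finally show ?thesis ..
qed

lemma preadditive_comp_zero:
  assumes "preadditive C" and "A \<in> Obj C" and f: "f \<in> Hom C B X"
  shows "Comp C f (Zero C A B) = Zero C A X"
proof -
  have cat: "category C"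
    using assms(1) by (rule preadditive_category)
  have "B \<in> Obj C"
    using cat_hom_objs[OF cat f] by simp
  with preadditive_hom_groups[OF assms(1)] assms(2)
  have zero: "Zero C A B \<in> Hom C A B" and "Add C (Zero C A B) (Zero C A B) = Zero C A B"
    by blast+
  then have "Add C (Comp C f (Zero C A B)) (Comp C f (Zero C A B)) = Comp C f (Zero C A B)"
    using preadditive_comp_add_left[OF assms(1) zero zero f] by simp
  then show ?thesis
    using preadditive_idem_eq_zero[OF assms(1) cat_comp_hom[OF cat zero f]] by simp
qed

lemma zero_object_hom_eq_zero:
  assumes "preadditive C" and "zero_object C Z" and f: "f \<in> Hom C Z X"
  shows "f = Zero C Z X"
proof -
  have Z: "Z \<in> Obj C" "Id C Z = Zero C Z Z"
    using assms(2) unfolding zero_object_def by auto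
  have "f = Comp C f (Id C Z)"
    using cat_id_right[OF preadditive_category[OF assms(1)] f] by simp
  also have "\<dots> = Zero C Z X"
    using preadditive_comp_zero[OF assms(1) Z(1) f] Z(2) by simp
  finally show ?thesis .
qed

lemma split_epi_cat_epi:
  assumes cat: "category C" and e: "e \<in> Hom C A B" and s: "s \<in> Hom C B A"
    and split: "Comp C e s = Id C B"
  shows "cat_epi C e"
  unfolding cat_epi_def
proof (intro exI conjI allI impI)
  show "e \<in> Hom C A B" by (fact e)
  fix Y g h assume g: "g \<in> Hom C B Y" and h: "h \<in> Hom C B Y" and eq: "Comp C g e = Comp C h e"
  have "g = Comp C (Comp C g e) s"
    using cat_comp_assoc[OF cat s e g] cat_id_right[OF cat g] split by simp
  also have "\<dots> = h"
    using cat_comp_assoc[OF cat s e h] cat_id_right[OF cat h] split eq by simp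
  finally show "g = h" .
qed

lemma cat_epiD:
  assumes "category C" and "cat_epi C e" and "e \<in> Hom C A B"
    and "g \<in> Hom C B Y" and "h \<in> Hom C B Y" and "Comp C g e = Comp C h e"
  shows "g = h"
  using assms cat_hom_unique unfolding cat_epi_def by metis

lemma rel_projectiveI:
  assumes "Q \<in> Obj C"
    and "\<And>X f g. X \<in> Obj C \<Longrightarrow> f \<in> Hom C Q X \<Longrightarrow> g \<in> Hom C Q X \<Longrightarrow> Fm f = Fm g \<Longrightarrow> f = g"
  shows "rel_projective C Fm Q"
  using assms unfolding rel_projective_def inj_on_def by blast

lemma rel_projectiveD:
  assumes "category C" and "rel_projective C Fm Q"
    and "f \<in> Hom C Q X" and "g \<in> Hom C Q X" and "Fm f = Fm g"
  shows "f = g"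
  using assms cat_hom_objs unfolding rel_projective_def inj_on_def by metis

lemma rel_projective_iff_epi_counit:
  assumes S: "category S" and T: "category T" and adj: "adjunction S T Lo Lm Ro Rm u c"
    and Q: "Q \<in> Obj S"
  shows "rel_projective S Rm Q \<longleftrightarrow> cat_epi S (c Q)"
proof
  have R: "is_functor S T Ro Rm"
    using adj by (rule adjunction_right_functor)
  have cQ: "c Q \<in> Hom S (Lo (Ro Q)) Q"
    using adjunction_counit_hom[OF adj Q] .
  show "cat_epi S (c Q)" if proj: "rel_projective S Rm Q"
    unfolding cat_epi_def
  proof (intro exI conjI allI impI)
    show "c Q \<in> Hom S (Lo (Ro Q)) Q" by (fact cQ)
    fix Y g h assume g: "g \<in> Hom S Q Y" and h: "h \<in> Hom S Q Y" and eq: "Comp S g (c Q) = Comp S h (c Q)"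
    have "cat_epi T (Rm (c Q))"
      using split_epi_cat_epi[OF T functor_hom[OF R cQ]
          adjunction_unit_hom[OF adj functor_obj[OF R Q]] adjunction_triangle_right[OF adj Q]] .
    moreover have "Comp T (Rm g) (Rm (c Q)) = Comp T (Rm h) (Rm (c Q))"
      using functor_comp[OF R cQ g] functor_comp[OF R cQ h] eq by simp
    ultimately have "Rm g = Rm h"
      using cat_epiD[OF T _ functor_hom[OF R cQ] functor_hom[OF R g] functor_hom[OF R h]] by blast
    then show "g = h"
      using rel_projectiveD[OF S proj g h] by blast
  qed
  show "rel_projective S Rm Q" if epi: "cat_epi S (c Q)"
  proof (rule rel_projectiveI[OF Q])
    fix X f g assume f: "f \<in> Hom S Q X" and g: "g \<in> Hom S Q X" and eq: "Rm f = Rm g"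
    have "Comp S f (c Q) = Comp S g (c Q)"
      using adjunction_counit_natural[OF adj f] adjunction_counit_natural[OF adj g] eq by simp
    then show "f = g"
      using cat_epiD[OF S epi cQ f g] by blast
  qed
qed

lemma rel_projective_left_adjoint_obj:
  assumes S: "category S" and T: "category T" and adj: "adjunction S T Lo Lm Ro Rm u c"
    and X: "X \<in> Obj T"
  shows "rel_projective S Rm (Lo X)"
proof -
  have L: "is_functor T S Lo Lm"
    using adj by (rule adjunction_left_functor)
  have LX: "Lo X \<in> Obj S"
    using functor_obj[OF L X] .
  have "cat_epi S (c (Lo X))"
    using split_epi_cat_epi[OF S adjunction_counit_hom[OF adj LX]
        functor_hom[OF L adjunction_unit_hom[OF adj X]] adjunction_triangle_left[OF adj X]] .
  then show ?thesis
    using rel_projective_iff_epi_counit[OF S T adj LX] by blast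
qed

lemma rel_projective_zero_object:
  assumes "preadditive C" and "zero_object C Z"
  shows "rel_projective C Fm Z"
proof (rule rel_projectiveI)
  show "Z \<in> Obj C"
    using assms(2) unfolding zero_object_def by blast
  show "f = g" if "f \<in> Hom C Z X" and "g \<in> Hom C Z X" for X f g
    using zero_object_hom_eq_zero[OF assms that(1)] zero_object_hom_eq_zero[OF assms that(2)] by simp
qed

lemma rel_projective_retract:
  assumes C: "category C" and F: "is_functor C D Fo Fm" and proj: "rel_projective C Fm P"
    and i: "i \<in> Hom C A P" and p: "p \<in> Hom C P A" and retract: "Comp C p i = Id C A"
  shows "rel_projective C Fm A"
proof (rule rel_projectiveI)
  show "A \<in> Obj C"
    using cat_hom_objs[OF C i] by simp
  fix X f g assume f: "f \<in> Hom C A X" and g: "g \<in> Hom C A X" and eq: "Fm f = Fm g"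
  have "Fm (Comp C f p) = Fm (Comp C g p)"
    using functor_comp[OF F p f] functor_comp[OF F p g] eq by simp
  then have through_p: "Comp C f p = Comp C g p"
    using rel_projectiveD[OF C proj cat_comp_hom[OF C p f] cat_comp_hom[OF C p g]] by blast
  have "f = Comp C (Comp C f p) i"
    using cat_comp_assoc[OF C i p f] cat_id_right[OF C f] retract by simp
  also have "\<dots> = Comp C (Comp C g p) i"
    using through_p by simp
  also have "\<dots> = g"
    using cat_comp_assoc[OF C i p g] cat_id_right[OF C g] retract by simp
  finally show "f = g" .
qed

lemma biproductE:
  assumes "biproduct C P A B"
  obtains i1 i2 p1 p2 where "P \<in> Obj C"
    "i1 \<in> Hom C A P" "i2 \<in> Hom C B P" "p1 \<in> Hom C P A" "p2 \<in> Hom C P B"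
    "Comp C p1 i1 = Id C A" "Comp C p2 i2 = Id C B"
    "Add C (Comp C i1 p1) (Comp C i2 p2) = Id C P"
  using assms unfolding biproduct_def by blast

lemma rel_projective_biproduct:
  assumes C: "preadditive C" and F: "is_functor C D Fo Fm" and bp: "biproduct C P A B"
    and projA: "rel_projective C Fm A" and projB: "rel_projective C Fm B"
  shows "rel_projective C Fm P"
proof -
  have cat: "category C"
    using C by (rule preadditive_category)
  obtain i1 i2 p1 p2 where P: "P \<in> Obj C"
    and i1: "i1 \<in> Hom C A P" and i2: "i2 \<in> Hom C B P" and p1: "p1 \<in> Hom C P A" and p2: "p2 \<in> Hom C P B"
    and sum: "Add C (Comp C i1 p1) (Comp C i2 p2) = Id C P"
    using bp by (rule biproductE)
  have decompose: "f = Add C (Comp C (Comp C f i1) p1) (Comp C (Comp C f i2) p2)"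
    if f: "f \<in> Hom C P X" for f X
  proof -
    have "f = Comp C f (Add C (Comp C i1 p1) (Comp C i2 p2))"
      using cat_id_right[OF cat f] sum by simp
    also have "\<dots> = Add C (Comp C (Comp C f i1) p1) (Comp C (Comp C f i2) p2)"
      using preadditive_comp_add_left[OF C cat_comp_hom[OF cat p1 i1] cat_comp_hom[OF cat p2 i2] f]
        cat_comp_assoc[OF cat p1 i1 f] cat_comp_assoc[OF cat p2 i2 f] by simp
    finally show ?thesis .
  qed
  have restrict_eq: "Comp C f i = Comp C g i"
    if proj: "rel_projective C Fm A'" and i: "i \<in> Hom C A' P"
      and f: "f \<in> Hom C P X" and g: "g \<in> Hom C P X" and eq: "Fm f = Fm g"
    for A' i f g X
  proof -
    have "Fm (Comp C f i) = Fm (Comp C g i)"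
      using functor_comp[OF F i f] functor_comp[OF F i g] eq by simp
    then show ?thesis
      by (rule rel_projectiveD[OF cat proj cat_comp_hom[OF cat i f] cat_comp_hom[OF cat i g]])
  qed
  show ?thesis
  proof (rule rel_projectiveI[OF P])
    fix X f g assume f: "f \<in> Hom C P X" and g: "g \<in> Hom C P X" and eq: "Fm f = Fm g"
    have "f = Add C (Comp C (Comp C f i1) p1) (Comp C (Comp C f i2) p2)"
      using decompose[OF f] .
    also have "\<dots> = Add C (Comp C (Comp C g i1) p1) (Comp C (Comp C g i2) p2)"
      using restrict_eq[OF projA i1 f g eq] restrict_eq[OF projB i2 f g eq] by simp
    also have "\<dots> = g"
      using decompose[OF g, symmetric] .
    finally show "f = g" .
  qed
qed

lemma rel_projective_fin_sums_im:
  assumes C: "preadditive C" and F: "is_functor C D Fo Fm"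
    and proj: "\<And>X. X \<in> ObjD \<Longrightarrow> rel_projective C Fm (G X)"
    and P: "P \<in> fin_sums_im C ObjD G"
  shows "rel_projective C Fm P"
  using P
proof induction
  case (zero Z)
  then show ?case
    using rel_projective_zero_object[OF C] by blast
next
  case (sum P X B)
  then show ?case
    using rel_projective_biproduct[OF C F] proj by blast
qed

lemma rel_projective_add_im:
  assumes C: "preadditive C" and F: "is_functor C D Fo Fm"
    and proj: "\<And>X. X \<in> ObjD \<Longrightarrow> rel_projective C Fm (G X)"
    and Q: "Q \<in> add_im C ObjD G"
  shows "rel_projective C Fm Q"
proof -
  obtain P Q' where P: "P \<in> fin_sums_im C ObjD G" and bp: "biproduct C P Q Q'"
    using Q unfolding add_im_def by blast
  obtain i p where i: "i \<in> Hom C Q P" and p: "p \<in> Hom C P Q" and retract: "Comp C p i = Id C Q"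
    using bp by (rule biproductE)
  show ?thesis
    using rel_projective_retract[OF preadditive_category[OF C] F rel_projective_fin_sums_im[OF C F proj P]
        i p retract] .
qed

lemma rel_projective_add_im_left_adjoint:
  assumes S: "preadditive S" and T: "category T" and adj: "adjunction S T Lo Lm Ro Rm u c"
    and Q: "Q \<in> add_im S (Obj T) Lo"
  shows "rel_projective S Rm Q"
  using rel_projective_add_im[OF S adjunction_right_functor[OF adj]
      rel_projective_left_adjoint_obj[OF preadditive_category[OF S] T adj] Q] .

definition op_cat :: "('o, 'm, 'x) cat_scheme \<Rightarrow> ('o, 'm, 'x) cat_scheme" where
  "op_cat C = C\<lparr>Hom := \<lambda>A B. Hom C B A, Comp := \<lambda>g f. Comp C f g, Zero := \<lambda>A B. Zero C B A\<rparr>"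

lemma op_cat_simps [simp]:
  "Obj (op_cat C) = Obj C" "Hom (op_cat C) A B = Hom C B A" "Comp (op_cat C) g f = Comp C f g"
  "Id (op_cat C) = Id C" "Add (op_cat C) = Add C" "Neg (op_cat C) = Neg C"
  "Zero (op_cat C) A B = Zero C B A"
  by (simp_all add: op_cat_def)

lemma category_op_cat: "category C \<Longrightarrow> category (op_cat C)"
  unfolding category_def by simp (metis (no_types))

lemma preadditive_op_cat:
  assumes "preadditive C"
  shows "preadditive (op_cat C)"
proof -
  have swap: "(\<forall>A\<in>Obj C. \<forall>B\<in>Obj C. P A B) \<Longrightarrow> \<forall>A\<in>Obj C. \<forall>B\<in>Obj C. P B A" for P
    by blast
  from assms swap[OF preadditive_hom_groups[OF assms]] show ?thesis
    unfolding preadditive_def op_cat_simps by (elim conjE, intro conjI category_op_cat) blast+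
qed

lemma zero_object_op_cat [simp]: "zero_object (op_cat C) Z \<longleftrightarrow> zero_object C Z"
  by (simp add: zero_object_def)

lemma biproduct_op_cat [simp]: "biproduct (op_cat C) P A B \<longleftrightarrow> biproduct C P A B"
  unfolding biproduct_def by auto

lemma fin_sums_im_op_cat [simp]: "fin_sums_im (op_cat C) ObjD F = fin_sums_im C ObjD F"
proof (intro set_eqI iffI)
  show "P \<in> fin_sums_im C ObjD F" if "P \<in> fin_sums_im (op_cat C) ObjD F" for P
    using that by induction (auto intro: fin_sums_im.intros)
  show "P \<in> fin_sums_im (op_cat C) ObjD F" if "P \<in> fin_sums_im C ObjD F" for P
    using that by induction (auto intro: fin_sums_im.intros)
qed

lemma add_im_op_cat [simp]: "add_im (op_cat C) ObjD F = add_im C ObjD F"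
  by (simp add: add_im_def)

lemma rel_projective_op_cat [simp]: "rel_projective (op_cat C) Fm Q \<longleftrightarrow> rel_injective C Fm Q"
  by (simp add: rel_projective_def rel_injective_def)

lemma cat_epi_op_cat [simp]: "cat_epi (op_cat C) f \<longleftrightarrow> cat_mono C f"
  unfolding cat_epi_def cat_mono_def by auto

lemma is_functor_op_cat: "is_functor C D Fo Fm \<Longrightarrow> is_functor (op_cat C) (op_cat D) Fo Fm"
  unfolding is_functor_def by simp

lemma adjunction_op_cat:
  "adjunction C D Lo Lm Ro Rm u c \<Longrightarrow> adjunction (op_cat D) (op_cat C) Ro Rm Lo Lm c u"
  unfolding adjunction_def by (simp add: is_functor_op_cat)

lemma rel_injective_iff_mono_unit:
  assumes "category S" and "category T" and "adjunction T S Lo Lm Ro Rm u c" and "Q \<in> Obj S"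
  shows "rel_injective S Lm Q \<longleftrightarrow> cat_mono S (u Q)"
  using rel_projective_iff_epi_counit[OF category_op_cat[OF assms(1)] category_op_cat[OF assms(2)]
      adjunction_op_cat[OF assms(3)]] assms(4)
  by simp

lemma rel_injective_add_im_right_adjoint:
  assumes "preadditive S" and "category T" and "adjunction T S Lo Lm Ro Rm u c"
    and "Q \<in> add_im S (Obj T) Ro"
  shows "rel_injective S Lm Q"
  using rel_projective_add_im_left_adjoint[OF preadditive_op_cat[OF assms(1)] category_op_cat[OF assms(2)]
      adjunction_op_cat[OF assms(3)]] assms(4)
  by simp

theorem lemma2p6:
  fixes S :: "('a, 'b) cat" and T :: "('c, 'd) cat"
    and To :: "'a \<Rightarrow> 'c" and Tm :: "'b \<Rightarrow> 'd"
  assumes "additive S" and "additive T" and "additive_functor S T To Tm"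
  shows
   "(\<forall>(Slo :: 'c \<Rightarrow> 'a) (Slm :: 'd \<Rightarrow> 'b) u counit.
       adjunction S T Slo Slm To Tm u counit \<longrightarrow>
         (\<forall>Q\<in>Obj S. rel_projective S Tm Q \<longleftrightarrow> cat_epi S (counit Q)) \<and>
         (\<forall>Q\<in>add_im S (Obj T) Slo. rel_projective S Tm Q)) \<and>
    (\<forall>(Sro :: 'c \<Rightarrow> 'a) (Srm :: 'd \<Rightarrow> 'b) unit c.
       adjunction T S To Tm Sro Srm unit c \<longrightarrow>
         (\<forall>Q\<in>Obj S. rel_injective S Tm Q \<longleftrightarrow> cat_mono S (unit Q)) \<and>
         (\<forall>Q\<in>add_im S (Obj T) Sro. rel_injective S Tm Q))"
proof -
  have S: "preadditive S" and T: "category T"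
    using assms(1,2) preadditive_category unfolding additive_def by blast+
  show ?thesis
    by (intro conjI allI impI ballI)
      (simp_all add: rel_projective_iff_epi_counit[OF preadditive_category[OF S] T]
        rel_projective_add_im_left_adjoint[OF S T]
        rel_injective_iff_mono_unit[OF preadditive_category[OF S] T]
        rel_injective_add_im_right_adjoint[OF S T])
qed

end
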